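(* Let $\psi:\mathcal T\to\mathbb S^{d_\psi}_+$ satisfy $\mathrm{tr}(\psi(\tau))\le D$ for all $\tau$. Run policies $\pi_1,\dots,\pi_T$ for $T$ episodes, where each $\pi_t$ may depend on the trajectories of episodes $1,\dots,t-1$, obtaining $\Sigma_T:=\sum_{t=1}^T\psi(\tau_t)$; then rerun each of $\pi_1,\dots,\pi_T$ once more (in fresh independent episodes), obtaining $\widetilde\Sigma_T:=\sum_{t=1}^T\psi(\widetilde\tau_t)$. Then with probability at least $1-\delta$ the following holds: if $\lambda_{\min}(\Sigma_T)\ge 12544\,Dd_\psi\log\frac{2+32T}{\delta}$, then $\lambda_{\min}(\widetilde\Sigma_T)\ge\frac12\lambda_{\min}(\Sigma_T)$ and $\lambda_{\min}\big(\sum_{t=1}^T\Gamma_{\pi_t}\big)\ge\frac12\lambda_{\min}(\Sigma_T)$.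
   Context: General system: for $h=1,\dots,H$, $x_{h+1}=f_h(x_h,u_h,w_h)$ with states in $\mathcal X\subseteq\mathbb R^{d_x}$, inputs in $\mathcal U\subseteq\mathbb R^{d_u}$, independent noise $w_h$ and arbitrary (unknown) dynamics $f_h$; each episode starts from a fixed state. $\mathcal T$ is the set of trajectories $\tau=(x_1,u_1,\dots,x_H,u_H,x_{H+1})$. A policy chooses each $u_h$ (possibly at random) from the past of the episode. $\mathbb S_+^{d}$ is the set of $d\times d$ PSD matrices. For a policy $\pi$, $\Gamma_\pi:=\mathbb E_\pi[\psi(\tau)]$, the expectation over one episode's trajectory under $\pi$. *)

theory Defs
  imports "HOL-Probability.Probability"
begin

definition psd :: "real^'d^'d \<Rightarrow> bool" where
  "psd A \<longleftrightarrow> transpose A = A \<and> (\<forall>x. 0 \<le> x \<bullet> (A *v x))"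

text \<open>Smallest (real) eigenvalue of a matrix; used only for symmetric matrices.\<close>
definition lambda_min :: "real^'d^'d \<Rightarrow> real" where
  "lambda_min A = Min {c. \<exists>v. v \<noteq> 0 \<and> A *v v = c *s v}"

text \<open>Gamma_pi = E_pi[psi(tau)], where law p is the distribution of one episode's
  trajectory under policy p.\<close>
definition Gamma :: "('p \<Rightarrow> 't measure) \<Rightarrow> ('t \<Rightarrow> real^'d^'d) \<Rightarrow> 'p \<Rightarrow> real^'d^'d" where
  "Gamma law psi p = integral\<^sup>L (law p) psi"

definition hist :: "(nat \<Rightarrow> 't \<times> 't) \<Rightarrow> nat \<Rightarrow> (nat \<Rightarrow> 't)" where
  "hist h n = (\<lambda>s\<in>{..<n}. fst (h s))"

text \<open>Joint law of ((tau_0, tau~_0), ..., (tau_{n-1}, tau~_{n-1})): in episode t the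
  policy pol t (hist) is chosen from the previous original trajectories, tau_t is drawn
  from its trajectory law, and a fresh independent rerun tau~_t is drawn from the same law.\<close>
fun joint :: "'t measure \<Rightarrow> ('p \<Rightarrow> 't measure) \<Rightarrow> (nat \<Rightarrow> (nat \<Rightarrow> 't) \<Rightarrow> 'p) \<Rightarrow> nat
    \<Rightarrow> (nat \<Rightarrow> 't \<times> 't) measure" where
  "joint Tr law pol 0 = return (PiM {} (\<lambda>_. Tr \<Otimes>\<^sub>M Tr)) (\<lambda>_. undefined)"
| "joint Tr law pol (Suc n) =
     joint Tr law pol n \<bind> (\<lambda>h. distr (law (pol n (hist h n)) \<Otimes>\<^sub>M law (pol n (hist h n)))
        (PiM {..<Suc n} (\<lambda>_. Tr \<Otimes>\<^sub>M Tr)) (\<lambda>ab. h(n := ab)))"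

end

theory Submission
  imports Defs
begin

text \<open>
  Fix a unit vector v and put f = v' \<psi> v / D, a function with values in [0, 1]. Convexity gives
  E[exp (a f)] \<le> exp ((exp a - 1) E f), so exp (\<Sum>_t a f(\<tau>_t) - (exp a - 1) E_\<pi>_t f) is a
  nonnegative supermartingale although each \<pi>_t depends on the past, and Markov's inequality bounds
  its tail. With a = 1/10 for the original runs and a = -1/10 for the reruns this shows, up to an
  additive D log(1/\<delta>), that v' \<Sigma>_T v is at most a constant times v' (\<Sum>_t \<Gamma>_\<pi>_t) v, which is at
  most a constant times the rerun form. A union bound over a grid net of mesh 1/(T d) makes this
  hold at all net points simultaneously; quadratic forms of psd matrices of trace at most T D are
  2 T D-Lipschitz on the unit ball, so the bounds reach the minimising unit vectors and hence the
  smallest eigenvalues. The threshold on \<lambda>_min(\<Sigma>_T) forces T \<ge> d^2 (as d \<lambda>_min \<le> trace \<le> T D),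
  which keeps the logarithm of the size of the net at O(d log(T/\<delta>)).
\<close>

section \<open>Positive semidefinite matrices and the smallest eigenvalue\<close>

lemma axis_inner_matrix_axis: "axis i 1 \<bullet> (A *v axis j 1) = (A :: real^'n^'n) $ i $ j"
  by (simp add: matrix_vector_mult_basis inner_axis' column_def)

lemma psd_symmetric: "psd A \<Longrightarrow> transpose A = A"
  and psd_quadratic_nonneg: "psd A \<Longrightarrow> 0 \<le> x \<bullet> (A *v x)"
  unfolding psd_def by blast+

lemma symmetric_matrix_inner_commute:
  fixes A :: "real^'n^'n"
  assumes "transpose A = A" shows "(A *v x) \<bullet> y = x \<bullet> (A *v y)"
  by (metis assms dot_lmul_matrix transpose_matrix_vector)

lemma psd_diag_nonneg: "psd A \<Longrightarrow> 0 \<le> A $ i $ i"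
  by (metis axis_inner_matrix_axis psd_quadratic_nonneg)

lemma psd_trace_nonneg: "psd A \<Longrightarrow> 0 \<le> trace A"
  unfolding trace_def by (intro sum_nonneg psd_diag_nonneg)

lemma psd_entry_sq_le:
  fixes A :: "real^'n^'n"
  assumes "psd A" shows "(A $ i $ j)^2 \<le> A $ i $ i * A $ j $ j"
proof -
  let ?a = "A $ i $ i" and ?b = "A $ j $ j" and ?c = "A $ i $ j"
  have quad: "0 \<le> s * s * ?a + 2 * s * t * ?c + t * t * ?b" for s t
  proof -
    have "A $ j $ i = ?c" using psd_symmetric[OF assms] by (metis transpose_def vec_lambda_beta)
    moreover have "0 \<le> (s *\<^sub>R axis i 1 + t *\<^sub>R axis j 1) \<bullet> (A *v (s *\<^sub>R axis i 1 + t *\<^sub>R axis j 1))"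
      by (rule psd_quadratic_nonneg[OF assms])
    ultimately show ?thesis
      by (simp add: matrix_vector_right_distrib matrix_vector_mult_scaleR inner_add_left
          inner_add_right axis_inner_matrix_axis algebra_simps)
  qed
  have "0 \<le> ?a" "0 \<le> ?b" using psd_diag_nonneg[OF assms] by auto
  then consider "0 < ?b" | "0 < ?a" | "?a = 0" "?b = 0" by linarith
  then show ?thesis
  proof cases
    case 1
    have "0 \<le> ?b * (?a * ?b - ?c^2)" using quad[of ?b "- ?c"] by (simp add: algebra_simps power2_eq_square)
    then show ?thesis using 1 by (simp add: zero_le_mult_iff)
  next
    case 2
    have "0 \<le> ?a * (?a * ?b - ?c^2)" using quad[of "- ?c" ?a] by (simp add: algebra_simps power2_eq_square)
    then show ?thesis using 2 by (simp add: zero_le_mult_iff)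
  next
    case 3
    then show ?thesis using quad[of 1 "- ?c"] by (simp add: power2_eq_square)
  qed
qed

lemma inner_matrix_vector_eq_double_sum:
  fixes A :: "real^'n^'n"
  shows "x \<bullet> (A *v y) = (\<Sum>i\<in>UNIV. \<Sum>j\<in>UNIV. x$i * A$i$j * y$j)"
  by (simp add: inner_vec_def matrix_vector_mult_def sum_distrib_left mult.assoc)

lemma psd_bilinear_bound:
  fixes A :: "real^'n^'n"
  assumes "psd A" shows "\<bar>x \<bullet> (A *v y)\<bar> \<le> trace A * norm x * norm y"
proof -
  define s :: "real^'n" where "s = (\<chi> i. sqrt (A$i$i))"
  define ax :: "real^'n" where "ax = (\<chi> i. \<bar>x$i\<bar>)"
  define ay :: "real^'n" where "ay = (\<chi> i. \<bar>y$i\<bar>)"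
  have entry: "\<bar>A$i$j\<bar> \<le> s$i * s$j" for i j
    using real_sqrt_le_mono[OF psd_entry_sq_le[OF assms, of i j]]
    by (simp add: s_def real_sqrt_mult)
  have "\<bar>x \<bullet> (A *v y)\<bar> \<le> (\<Sum>i\<in>UNIV. \<Sum>j\<in>UNIV. \<bar>x$i\<bar> * \<bar>A$i$j\<bar> * \<bar>y$j\<bar>)"
    unfolding inner_matrix_vector_eq_double_sum
    by (rule order_trans[OF sum_abs]) (intro sum_mono order_trans[OF sum_abs] eq_refl, simp add: abs_mult)
  also have "\<dots> \<le> (\<Sum>i\<in>UNIV. \<Sum>j\<in>UNIV. (ax$i * s$i) * (ay$j * s$j))"
  proof (intro sum_mono)
    fix i j
    have "\<bar>x$i\<bar> * \<bar>A$i$j\<bar> * \<bar>y$j\<bar> \<le> \<bar>x$i\<bar> * (s$i * s$j) * \<bar>y$j\<bar>"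
      by (intro mult_right_mono mult_left_mono entry) auto
    then show "\<bar>x$i\<bar> * \<bar>A$i$j\<bar> * \<bar>y$j\<bar> \<le> (ax$i * s$i) * (ay$j * s$j)"
      by (simp add: ax_def ay_def mult_ac)
  qed
  also have "\<dots> = (ax \<bullet> s) * (ay \<bullet> s)"
    by (simp add: inner_vec_def sum_product)
  also have "\<dots> \<le> (norm ax * norm s) * (norm ay * norm s)"
  proof -
    have "0 \<le> ax \<bullet> s" "0 \<le> ay \<bullet> s"
      unfolding inner_vec_def ax_def ay_def s_def using psd_diag_nonneg[OF assms] by (auto intro!: sum_nonneg)
    then show ?thesis using norm_cauchy_schwarz[of ax s] norm_cauchy_schwarz[of ay s]
      by (intro mult_mono) auto
  qed
  also have "norm ax = norm x"
    unfolding ax_def norm_vec_def L2_set_def by simp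
  also have "norm ay = norm y"
    unfolding ay_def norm_vec_def L2_set_def by simp
  also have "norm s * norm s = trace A"
    using psd_diag_nonneg[OF assms]
    by (simp add: norm_vec_def L2_set_def sum_nonneg s_def trace_def)
  then have "norm x * norm s * (norm y * norm s) = trace A * norm x * norm y"
    by (simp add: algebra_simps)
  finally show ?thesis .
qed

lemma psd_entry_abs_le_trace: "psd A \<Longrightarrow> \<bar>A $ i $ j\<bar> \<le> trace A"
  using psd_bilinear_bound[of A "axis i 1" "axis j 1"] by (simp add: axis_inner_matrix_axis)

lemma psd_quadratic_le_trace:
  fixes A :: "real^'n^'n"
  assumes "psd A" "norm x \<le> 1" shows "x \<bullet> (A *v x) \<le> trace A"
proof -
  have "x \<bullet> (A *v x) \<le> trace A * norm x * norm x"
    using psd_bilinear_bound[OF assms(1), of x x] by simp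
  also have "\<dots> \<le> trace A"
    using assms psd_trace_nonneg[OF assms(1)] mult_mono[OF assms(2) assms(2)]
    by (simp add: mult.assoc mult_left_le)
  finally show ?thesis .
qed

lemma psd_quadratic_lipschitz:
  fixes A :: "real^'n^'n"
  assumes "psd A" "norm u \<le> 1" "norm v \<le> 1"
  shows "\<bar>u \<bullet> (A *v u) - v \<bullet> (A *v v)\<bar> \<le> 2 * trace A * norm (u - v)"
proof -
  have "v \<bullet> (A *v u) = u \<bullet> (A *v v)"
    using symmetric_matrix_inner_commute[OF psd_symmetric[OF assms(1)], of v u] by (simp add: inner_commute)
  then have "u \<bullet> (A *v u) - v \<bullet> (A *v v) = (u - v) \<bullet> (A *v (u + v))"
    by (simp add: matrix_vector_right_distrib inner_add_right inner_diff_left)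
  also have "\<bar>\<dots>\<bar> \<le> trace A * norm (u - v) * norm (u + v)"
    by (rule psd_bilinear_bound[OF assms(1)])
  also have "\<dots> \<le> trace A * norm (u - v) * 2"
    using norm_triangle_ineq[of u v] assms psd_trace_nonneg[OF assms(1)]
    by (intro mult_left_mono) auto
  finally show ?thesis by (simp add: mult_ac)
qed

lemma quadratic_nonneg_imp_linear_coeff_zero:
  fixes a c :: real
  assumes nonneg: "\<And>t. 0 \<le> 2 * t * a + t * t * c" and "0 \<le> a" shows "a = 0"
proof (rule ccontr)
  assume "a \<noteq> 0"
  with \<open>0 \<le> a\<close> have "0 < a" by simp
  define k where "k = \<bar>c\<bar> + 1"
  have "0 < k" "c \<le> k" by (auto simp: k_def)
  define t where "t = - a / k"
  have "0 \<le> 2 * t * a + t * t * c" by (rule nonneg)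
  also have "\<dots> \<le> 2 * t * a + t * t * k"
    using \<open>c \<le> k\<close> by (intro add_left_mono mult_left_mono) auto
  also have "\<dots> = - a * a / k" using \<open>0 < k\<close> by (simp add: t_def field_simps)
  also have "\<dots> < 0" using \<open>0 < a\<close> \<open>0 < k\<close> by simp
  finally show False by simp
qed

text \<open>A minimiser of the Rayleigh quotient on the unit sphere is an eigenvector: the residual
  \<open>r = A u - m u\<close> makes \<open>Q (u + t r) = 2 t \<bar>r\<bar>\<^sup>2 + t\<^sup>2 Q r\<close> with \<open>Q \<ge> 0\<close>, which forces \<open>r = 0\<close>.\<close>
lemma symmetric_matrix_rayleigh_minimizer:
  fixes A :: "real^'n^'n"
  assumes sym: "transpose A = A"
  shows "\<exists>u. norm u = 1 \<and> A *v u = (u \<bullet> (A *v u)) *s u \<and>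
              (\<forall>x. (u \<bullet> (A *v u)) * (norm x)^2 \<le> x \<bullet> (A *v x))"
proof -
  let ?f = "\<lambda>x::real^'n. x \<bullet> (A *v x)"
  have "continuous_on (sphere 0 1) ?f"
    by (intro continuous_intros linear_continuous_on matrix_vector_mul_linear)
  moreover have "sphere (0::real^'n) 1 \<noteq> {}" using norm_axis_1 by fastforce
  ultimately have "\<exists>u\<in>sphere 0 1. \<forall>y\<in>sphere 0 1. ?f u \<le> ?f y"
    by (intro continuous_attains_inf) auto
  then obtain u where u: "norm u = 1" and umin: "\<And>y. norm y = 1 \<Longrightarrow> ?f u \<le> ?f y" by auto
  define m where "m = ?f u"
  have rayleigh: "m * (norm x)^2 \<le> ?f x" for x
  proof (cases "x = 0")
    case False
    then have n: "norm x > 0" by simp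
    have "m \<le> ?f (x /\<^sub>R norm x)" unfolding m_def by (rule umin) (use n in simp)
    also have "?f (x /\<^sub>R norm x) = ?f x / (norm x)^2"
      using n by (simp add: matrix_vector_mult_scaleR power2_eq_square field_simps)
    finally show ?thesis using n by (simp add: field_simps)
  qed simp
  define Q where "Q y = y \<bullet> (A *v y - m *s y)" for y
  have Q_nonneg: "0 \<le> Q y" for y using rayleigh[of y]
    by (simp add: Q_def inner_diff_right power2_norm_eq_inner scalar_mult_eq_scaleR)
  define r where "r = A *v u - m *s u"
  have Q_u: "Q u = 0"
    using u by (simp add: Q_def m_def inner_diff_right scalar_mult_eq_scaleR power2_norm_eq_inner[symmetric])
  have u_r: "u \<bullet> (A *v r - m *s r) = r \<bullet> r"
  proof -
    have "u \<bullet> (A *v r - m *s r) = (A *v u) \<bullet> r - m * (u \<bullet> r)"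
      using symmetric_matrix_inner_commute[OF sym, of u r]
      by (simp add: inner_diff_right scalar_mult_eq_scaleR)
    also have "\<dots> = r \<bullet> r" by (simp add: r_def inner_diff_left scalar_mult_eq_scaleR inner_commute)
    finally show ?thesis .
  qed
  have Q_ray: "Q (u + t *s r) = 2 * t * (r \<bullet> r) + t * t * Q r" for t
  proof -
    have "A *v (u + t *s r) - m *s (u + t *s r) = (A *v u - m *s u) + t *\<^sub>R (A *v r - m *s r)"
      by (simp add: matrix_vector_right_distrib matrix_vector_mult_scaleR scalar_mult_eq_scaleR
           scaleR_add_right scaleR_diff_right)
    then have "A *v (u + t *s r) - m *s (u + t *s r) = r + t *\<^sub>R (A *v r - m *s r)"
      by (simp only: r_def)
    then have "Q (u + t *s r) = (u + t *\<^sub>R r) \<bullet> (r + t *\<^sub>R (A *v r - m *s r))"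
      by (simp add: Q_def scalar_mult_eq_scaleR)
    also have "\<dots> = u \<bullet> r + t * (u \<bullet> (A *v r - m *s r)) + t * (r \<bullet> r) + t * t * Q r"
      by (simp add: Q_def inner_add_left inner_add_right algebra_simps)
    also have "u \<bullet> r = Q u" by (simp add: Q_def r_def)
    finally show ?thesis using Q_u u_r by simp
  qed
  have "r \<bullet> r = 0"
    using Q_nonneg[of "u + _ *s r"] by (intro quadratic_nonneg_imp_linear_coeff_zero[where c = "Q r"])
      (simp_all add: Q_ray)
  then have "A *v u = m *s u" by (simp add: r_def)
  then show ?thesis using u rayleigh unfolding m_def by blast
qed

lemma symmetric_matrix_finite_eigenvalues:
  fixes A :: "real^'n^'n"
  assumes sym: "transpose A = A"
  shows "finite {c. \<exists>v. v \<noteq> 0 \<and> A *v v = c *s v}"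
proof -
  define E where "E = {c. \<exists>v. v \<noteq> 0 \<and> A *v v = c *s v}"
  define ev where "ev c = (SOME v. v \<noteq> 0 \<and> A *v v = c *s v)" for c
  have ev: "ev c \<noteq> 0 \<and> A *v ev c = c *s ev c" if "c \<in> E" for c
    using that unfolding E_def ev_def by (metis (mono_tags, lifting) mem_Collect_eq someI_ex)
  have inj: "inj_on ev E"
  proof (rule inj_onI)
    fix c c' assume c: "c \<in> E" "c' \<in> E" "ev c = ev c'"
    then have "c *s ev c = c' *s ev c" using ev by metis
    then have "(c - c') *\<^sub>R ev c = 0" by (simp add: scalar_mult_eq_scaleR scaleR_diff_left)
    then show "c = c'" using ev[OF c(1)] by simp
  qed
  have "pairwise orthogonal (ev ` E)"
  proof (rule pairwiseI)
    fix x y assume "x \<in> ev ` E" "y \<in> ev ` E" "x \<noteq> y"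
    then obtain c c' where c: "c \<in> E" "c' \<in> E" "x = ev c" "y = ev c'" "c \<noteq> c'" by blast
    have "c * (x \<bullet> y) = (A *v x) \<bullet> y" using ev[OF c(1)] c(3) by (simp add: scalar_mult_eq_scaleR)
    also have "\<dots> = x \<bullet> (A *v y)" by (rule symmetric_matrix_inner_commute[OF sym])
    also have "\<dots> = c' * (x \<bullet> y)" using ev[OF c(2)] c(4) by (simp add: scalar_mult_eq_scaleR)
    finally show "orthogonal x y" using c(5) by (simp add: orthogonal_def)
  qed
  moreover have "0 \<notin> ev ` E" using ev by force
  ultimately have "finite (ev ` E)"
    using pairwise_orthogonal_independent independent_bound by blast
  then show ?thesis using finite_imageD[OF _ inj] unfolding E_def by blast
qed

lemma
  fixes A :: "real^'n^'n"
  assumes sym: "transpose A = A"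
  shows lambda_min_attained: "\<exists>u. norm u = 1 \<and> lambda_min A = u \<bullet> (A *v u)"
    and lambda_min_le_quadratic: "lambda_min A * (norm x)^2 \<le> x \<bullet> (A *v x)"
proof -
  obtain u where u: "norm u = 1" "A *v u = (u \<bullet> (A *v u)) *s u"
    and min: "\<And>x. (u \<bullet> (A *v u)) * (norm x)^2 \<le> x \<bullet> (A *v x)"
    using symmetric_matrix_rayleigh_minimizer[OF sym] by blast
  have "lambda_min A = u \<bullet> (A *v u)"
    unfolding lambda_min_def
  proof (rule Min_eqI)
    show "finite {c. \<exists>v. v \<noteq> 0 \<and> A *v v = c *s v}"
      by (rule symmetric_matrix_finite_eigenvalues[OF sym])
    show "u \<bullet> (A *v u) \<in> {c. \<exists>v. v \<noteq> 0 \<and> A *v v = c *s v}"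
      using u by (intro CollectI exI[of _ u]) auto
    fix c assume "c \<in> {c. \<exists>v. v \<noteq> 0 \<and> A *v v = c *s v}"
    then obtain v where v: "v \<noteq> 0" "A *v v = c *s v" by auto
    have "(u \<bullet> (A *v u)) * (norm v)^2 \<le> c * (norm v)^2"
      using min[of v] v by (simp add: scalar_mult_eq_scaleR power2_norm_eq_inner)
    then show "u \<bullet> (A *v u) \<le> c" using v by simp
  qed
  then show "\<exists>u. norm u = 1 \<and> lambda_min A = u \<bullet> (A *v u)"
    and "lambda_min A * (norm x)^2 \<le> x \<bullet> (A *v x)"
    using u(1) min by auto
qed

lemma lambda_min_zero: "lambda_min (0 :: real^'n^'n) = 0"
  using lambda_min_attained[of "0 :: real^'n^'n"] by (auto simp: transpose_def vec_eq_iff)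

lemma card_mult_lambda_min_le_trace:
  fixes A :: "real^'n^'n"
  assumes "transpose A = A"
  shows "real CARD('n) * lambda_min A \<le> trace A"
proof -
  have "lambda_min A \<le> A $ i $ i" for i
    using lambda_min_le_quadratic[OF assms, of "axis i 1"] by (simp add: axis_inner_matrix_axis)
  then have "(\<Sum>i\<in>(UNIV :: 'n set). lambda_min A) \<le> trace A" unfolding trace_def by (intro sum_mono)
  then show ?thesis by simp
qed

lemma psd_zero: "psd 0"
  by (simp add: psd_def transpose_def vec_eq_iff)

lemma psd_add: "psd A \<Longrightarrow> psd B \<Longrightarrow> psd (A + B)"
  unfolding psd_def
  by (auto simp: transpose_def vec_eq_iff matrix_vector_mult_add_rdistrib inner_add_right)

lemma psd_sum: "(\<And>t. t \<in> S \<Longrightarrow> psd (f t)) \<Longrightarrow> psd (\<Sum>t\<in>S. f t)"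
  by (induction S rule: infinite_finite_induct) (auto intro: psd_zero psd_add)

lemma trace_sum: "trace (\<Sum>t\<in>S. f t) = (\<Sum>t\<in>S. trace (f t :: real^'n^'n))"
  by (induction S rule: infinite_finite_induct) (simp_all add: trace_add, simp_all add: trace_def)

lemma quadratic_form_sum: "v \<bullet> ((\<Sum>t\<in>S. f t) *v v) = (\<Sum>t\<in>S. v \<bullet> (f t *v v))"
  by (induction S rule: infinite_finite_induct) (auto simp: matrix_vector_mult_add_rdistrib inner_add_right)

lemma linear_quadratic_form: "linear (\<lambda>A::real^'n^'n. v \<bullet> (A *v v))"
  by (rule linearI) (simp_all add: matrix_vector_mult_add_rdistrib inner_add_right
      scaleR_matrix_vector_assoc[symmetric])

lemma linear_trace: "linear (trace :: real^'n^'n \<Rightarrow> real)"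
  by (rule linearI) (simp_all add: trace_def sum_distrib_left sum.distrib)

lemma linear_transpose: "linear (transpose :: real^'n^'n \<Rightarrow> real^'n^'n)"
  by (rule linearI) (simp_all add: transpose_def vec_eq_iff)

lemma psd_norm_le_trace:
  fixes A :: "real^'n^'n" assumes "psd A"
  shows "norm A \<le> real CARD('n) * real CARD('n) * trace A"
proof -
  have "norm A \<le> (\<Sum>i\<in>UNIV. norm (A$i))"
    unfolding norm_vec_def by (rule L2_set_le_sum) simp
  also have "\<dots> \<le> (\<Sum>i\<in>(UNIV::'n set). \<Sum>j\<in>(UNIV::'n set). trace A)"
    using psd_entry_abs_le_trace[OF assms]
    by (intro sum_mono order_trans[OF norm_le_l1_cart]) auto
  finally show ?thesis by simp
qed

lemma psd_quadratic_close:
  fixes A :: "real^'n^'n"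
  assumes "psd A" "trace A \<le> B" "norm u \<le> 1" "norm v \<le> 1" "2 * B * norm (u - v) \<le> k"
  shows "\<bar>u \<bullet> (A *v u) - v \<bullet> (A *v v)\<bar> \<le> k"
proof -
  have "2 * trace A * norm (u - v) \<le> 2 * B * norm (u - v)"
    using assms(2) by (intro mult_right_mono) auto
  then show ?thesis using psd_quadratic_lipschitz[OF assms(1,3,4)] assms(5) by linarith
qed

text \<open>One-sided bounds at the net points pass, through the minimising unit vectors, to the
  smallest eigenvalues; \<open>c1\<close> and \<open>c2\<close> stand for \<open>exp (1/10) - 1\<close> and \<open>1 - exp (- 1/10)\<close>.\<close>
lemma lambda_min_half_from_net_bounds:
  fixes S S' G :: "real^'n^'n" and V :: "(real^'n) set"
  assumes psd: "psd S" "psd S'" "psd G"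
    and trace: "trace S \<le> B" "trace S' \<le> B" "trace G \<le> B"
    and m0: "0 \<le> lambda_min S"
    and V: "\<And>v. v \<in> V \<Longrightarrow> norm v \<le> 1"
    and cover: "\<And>u. norm u = 1 \<Longrightarrow> \<exists>v\<in>V. 2 * B * norm (u - v) \<le> k"
    and k: "k \<le> lambda_min S / 3136" and e: "e \<le> lambda_min S / 3136"
    and ev1: "\<And>v. v \<in> V \<Longrightarrow> (1/10) * (v \<bullet> (S *v v)) - c1 * (v \<bullet> (G *v v)) \<le> e"
    and ev2: "\<And>v. v \<in> V \<Longrightarrow> c2 * (v \<bullet> (G *v v)) - (1/10) * (v \<bullet> (S' *v v)) \<le> e"
    and c1: "0 < c1" "c1 \<le> 1/9" and c2: "1/11 \<le> c2"
  shows "lambda_min S / 2 \<le> lambda_min G" and "lambda_min S / 2 \<le> lambda_min S'"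
proof -
  let ?m = "lambda_min S"
  have near: "\<exists>v\<in>V. 2 * B * norm (u - v) \<le> k \<and> norm v \<le> 1 \<and>
      (9/10) * ?m - (9/10) * k - 9 * e \<le> v \<bullet> (G *v v)" if u: "norm u = 1" for u
  proof -
    obtain v where v: "v \<in> V" "2 * B * norm (u - v) \<le> k" using cover[OF u] by blast
    have "?m \<le> u \<bullet> (S *v u)"
      using lambda_min_le_quadratic[OF psd_symmetric[OF psd(1)], of u] u by simp
    then have "?m - k \<le> v \<bullet> (S *v v)"
      using psd_quadratic_close[OF psd(1) trace(1) _ V[OF v(1)] v(2)] u by force
    moreover have "c1 * (v \<bullet> (G *v v)) \<le> (1/9) * (v \<bullet> (G *v v))"
      using c1 psd_quadratic_nonneg[OF psd(3)] by (intro mult_right_mono) auto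
    ultimately show ?thesis using v V[OF v(1)] ev1[OF v(1)] by force
  qed
  obtain u where u: "norm u = 1" "lambda_min G = u \<bullet> (G *v u)"
    using lambda_min_attained[OF psd_symmetric[OF psd(3)]] by blast
  then obtain v where "2 * B * norm (u - v) \<le> k" "norm v \<le> 1"
      "(9/10) * ?m - (9/10) * k - 9 * e \<le> v \<bullet> (G *v v)"
    using near by blast
  then show "?m / 2 \<le> lambda_min G"
    using psd_quadratic_close[OF psd(3) trace(3), of u v] u k e m0 by force
  obtain u where u: "norm u = 1" "lambda_min S' = u \<bullet> (S' *v u)"
    using lambda_min_attained[OF psd_symmetric[OF psd(2)]] by blast
  then obtain v where v: "v \<in> V" "2 * B * norm (u - v) \<le> k" "norm v \<le> 1"
      "(9/10) * ?m - (9/10) * k - 9 * e \<le> v \<bullet> (G *v v)"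
    using near by blast
  have "(1/11) * (v \<bullet> (G *v v)) \<le> c2 * (v \<bullet> (G *v v))"
    using c2 psd_quadratic_nonneg[OF psd(3)] by (intro mult_right_mono) auto
  then show "?m / 2 \<le> lambda_min S'"
    using psd_quadratic_close[OF psd(2) trace(2), of u v] ev2[OF v(1)] v u k e m0 by force
qed

section \<open>A grid net of the unit ball\<close>

definition grid_net :: "nat \<Rightarrow> (real^'n) set" where
  "grid_net M = {v. norm v \<le> 1} \<inter>
     (\<lambda>k. \<chi> i. real_of_int (k i) / real M) ` (PiE UNIV (\<lambda>_. {- int M..int M}))"

lemma finite_grid_net: "finite (grid_net M :: (real^'n) set)"
  and card_grid_net_le: "card (grid_net M :: (real^'n) set) \<le> (2 * M + 1) ^ CARD('n)"
proof -
  let ?P = "PiE (UNIV::'n set) (\<lambda>_. {- int M..int M})"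
  let ?f = "(\<lambda>k. (\<chi> i. real_of_int (k i) / real M) :: real^'n)"
  have "finite ?P" by (intro finite_PiE) auto
  have sub: "grid_net M \<subseteq> ?f ` ?P" unfolding grid_net_def by auto
  show "finite (grid_net M :: (real^'n) set)"
    using finite_subset[OF sub] \<open>finite ?P\<close> by blast
  have "card (grid_net M :: (real^'n) set) \<le> card ?P"
    using card_mono[OF _ sub] card_image_le[of ?P ?f] \<open>finite ?P\<close> by fastforce
  also have "card ?P = (2 * M + 1) ^ CARD('n)"
    by (simp add: card_PiE nat_add_distrib nat_mult_distrib)
  finally show "card (grid_net M :: (real^'n) set) \<le> (2 * M + 1) ^ CARD('n)" .
qed

lemma grid_rounding:
  fixes x :: real and M :: nat
  assumes M: "1 \<le> M" and x: "\<bar>x\<bar> \<le> 1"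
  shows "\<exists>k::int. \<bar>k\<bar> \<le> int M \<and> \<bar>k / M\<bar> \<le> \<bar>x\<bar> \<and> \<bar>x - k / M\<bar> \<le> 1 / M"
proof -
  define r where "r = \<lfloor>M * \<bar>x\<bar>\<rfloor>"
  have "0 < real M" using M by simp
  have "M * \<bar>x\<bar> \<le> M" using x by (simp add: mult_left_le)
  then have r: "0 \<le> r" "r \<le> int M" "r \<le> M * \<bar>x\<bar>" "M * \<bar>x\<bar> < r + 1"
    unfolding r_def by (simp_all add: floor_le_iff)
  then have "r / M \<le> \<bar>x\<bar>" "\<bar>x\<bar> \<le> (r + 1) / M"
    using \<open>0 < real M\<close> by (simp_all add: divide_le_eq le_divide_eq mult.commute)
  then have bounds: "r / M \<le> \<bar>x\<bar>" "\<bar>x\<bar> - r / M \<le> 1 / M" "\<bar>r / M\<bar> = r / M"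
    using r(1) by (simp_all add: add_divide_distrib)
  show ?thesis
  proof (cases "0 \<le> x")
    case True
    with bounds r(1,2) show ?thesis by (intro exI[of _ r]) simp
  next
    case False
    with bounds r(1,2) show ?thesis by (intro exI[of _ "- r"]) simp
  qed
qed

lemma grid_net_covers:
  fixes u :: "real^'n"
  assumes M: "1 \<le> M" and u: "norm u \<le> 1"
  shows "\<exists>v\<in>grid_net M. norm (u - v) \<le> real CARD('n) / real M"
proof -
  have "\<forall>i. \<exists>k::int. \<bar>k\<bar> \<le> int M \<and> \<bar>k / M\<bar> \<le> \<bar>u$i\<bar> \<and> \<bar>u$i - k / M\<bar> \<le> 1 / M"
    using grid_rounding[OF M] component_le_norm_cart[of u] u by (meson order_trans)
  then obtain k where k: "\<And>i. \<bar>k i\<bar> \<le> int M \<and> \<bar>k i / M\<bar> \<le> \<bar>u$i\<bar> \<and> \<bar>u$i - k i / M\<bar> \<le> 1 / M"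
    by metis
  define v :: "real^'n" where "v = (\<chi> i. real_of_int (k i) / real M)"
  have "v \<in> grid_net M"
    unfolding grid_net_def
  proof
    show "v \<in> {v. norm v \<le> 1}"
      using norm_le_componentwise_cart[of v u] k u by (force simp: v_def)
    have "k i \<in> {- int M..int M}" for i using k[of i] by (simp add: abs_le_iff)
    then have "k \<in> PiE UNIV (\<lambda>_. {- int M..int M})" by auto
    then show "v \<in> (\<lambda>k. \<chi> i. real_of_int (k i) / real M) ` (PiE UNIV (\<lambda>_. {- int M..int M}))"
      unfolding v_def by blast
  qed
  moreover have "norm (u - v) \<le> (\<Sum>i\<in>(UNIV::'n set). 1 / real M)"
    using k by (intro order_trans[OF norm_le_l1_cart] sum_mono) (simp add: v_def)
  ultimately show ?thesis by auto
qed

lemma grid_net_scaled_cover: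
  fixes u :: "real^'n"
  assumes T: "1 \<le> T" and B: "0 \<le> B" and u: "norm u = 1"
  shows "\<exists>v\<in>grid_net (T * CARD('n)). 2 * (real T * B) * norm (u - v) \<le> 2 * B"
proof -
  have "1 \<le> T * CARD('n)" and "real CARD('n) / real (T * CARD('n)) = 1 / real T"
    using T by (simp_all add: Suc_le_eq)
  then obtain v where v: "v \<in> grid_net (T * CARD('n))" "norm (u - v) \<le> 1 / real T"
    using grid_net_covers[of "T * CARD('n)" u] u by auto
  have "2 * (real T * B) * norm (u - v) \<le> 2 * (real T * B) * (1 / real T)"
    using v(2) B by (intro mult_left_mono) auto
  also have "\<dots> = 2 * B" using T by simp
  finally show ?thesis using v(1) by blast
qed

section \<open>Exponential tail bounds\<close>

lemma emeasure_exp_tail_le: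
  assumes ps: "prob_space M" and f: "f \<in> borel_measurable M"
    and int: "(\<integral>\<^sup>+x. ennreal (exp (f x)) \<partial>M) \<le> 1"
  shows "emeasure M {x\<in>space M. c < f x} \<le> ennreal (exp (- c))"
proof -
  have S: "{x\<in>space M. c < f x} \<in> sets M" using f by measurable
  have "emeasure M {x\<in>space M. c < f x} = (\<integral>\<^sup>+x. indicator {x\<in>space M. c < f x} x \<partial>M)"
    using S by simp
  also have "\<dots> \<le> (\<integral>\<^sup>+x. ennreal (exp (- c)) * ennreal (exp (f x)) \<partial>M)"
  proof (rule nn_integral_mono)
    fix x assume "x \<in> space M"
    show "indicator {x\<in>space M. c < f x} x \<le> ennreal (exp (- c)) * ennreal (exp (f x))"
    proof (cases "c < f x")
      case True
      then have "1 \<le> exp (- c) * exp (f x)" by (simp add: exp_add[symmetric])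
      then have "ennreal 1 \<le> ennreal (exp (- c) * exp (f x))" by (rule ennreal_leI)
      then show ?thesis using True \<open>x \<in> space M\<close> by (simp add: ennreal_mult[symmetric] indicator_def)
    qed (simp add: indicator_def)
  qed
  also have "\<dots> = ennreal (exp (- c)) * (\<integral>\<^sup>+x. ennreal (exp (f x)) \<partial>M)"
    by (rule nn_integral_cmult) (use f in measurable)
  also have "\<dots> \<le> ennreal (exp (- c)) * 1" by (intro mult_left_mono int) simp
  finally show ?thesis by simp
qed

lemma exp_mult_le_convex: fixes a y :: real assumes "0 \<le> y" "y \<le> 1"
  shows "exp (a * y) \<le> 1 + (exp a - 1) * y"
proof -
  have c: "convex_on UNIV (\<lambda>x. exp (1 * x))" by (rule convex_on_exp) simp
  have "exp (1 * ((1 - y) * 0 + y * a)) \<le> (1 - y) * exp (1 * 0) + y * exp (1 * a)"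
    using convex_onD[OF c, of y 0 a] assms by simp
  then show ?thesis by (simp add: algebra_simps)
qed

lemma nn_integral_exp_mult_le:
  assumes ps: "prob_space L" and f: "f \<in> borel_measurable L"
    and b: "\<And>x. x \<in> space L \<Longrightarrow> 0 \<le> f x \<and> f x \<le> 1"
  shows "(\<integral>\<^sup>+x. ennreal (exp (a * f x)) \<partial>L) \<le> ennreal (exp ((exp a - 1) * integral\<^sup>L L f))"
proof -
  interpret prob_space L by (rule ps)
  have intf: "integrable L f"
    by (rule integrable_const_bound[where B=1]) (use b f in \<open>auto intro!: AE_I2\<close>)
  have "(\<integral>\<^sup>+x. ennreal (exp (a * f x)) \<partial>L) \<le> (\<integral>\<^sup>+x. ennreal (1 + (exp a - 1) * f x) \<partial>L)"
    by (intro nn_integral_mono ennreal_leI exp_mult_le_convex) (use b in auto)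
  also have "\<dots> = ennreal (integral\<^sup>L L (\<lambda>x. 1 + (exp a - 1) * f x))"
  proof (rule nn_integral_eq_integral)
    show "integrable L (\<lambda>x. 1 + (exp a - 1) * f x)" using intf by auto
    show "AE x in L. 0 \<le> 1 + (exp a - 1) * f x"
    proof (rule AE_I2)
      fix x assume x: "x \<in> space L"
      have "0 < exp (a * f x)" by simp
      also have "\<dots> \<le> 1 + (exp a - 1) * f x" using b[OF x] by (intro exp_mult_le_convex) auto
      finally show "0 \<le> 1 + (exp a - 1) * f x" by simp
    qed
  qed
  also have "integral\<^sup>L L (\<lambda>x. 1 + (exp a - 1) * f x) = 1 + (exp a - 1) * integral\<^sup>L L f"
    using intf by (simp add: prob_space)
  also have "ennreal (1 + (exp a - 1) * integral\<^sup>L L f) \<le> ennreal (exp ((exp a - 1) * integral\<^sup>L L f))"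
    by (intro ennreal_leI exp_ge_add_one_self)
  finally show ?thesis .
qed

lemma nn_integral_pair_fst: assumes "prob_space L" "f \<in> borel_measurable L"
  shows "(\<integral>\<^sup>+ab. f (fst ab) \<partial>(L \<Otimes>\<^sub>M L)) = (\<integral>\<^sup>+x. f x \<partial>L)"
proof -
  interpret prob_space L by fact
  have "(\<integral>\<^sup>+ab. f (fst ab) \<partial>(L \<Otimes>\<^sub>M L)) = (\<integral>\<^sup>+x. \<integral>\<^sup>+y. f (fst (x, y)) \<partial>L \<partial>L)"
    by (rule sigma_finite_measure.nn_integral_fst[symmetric])
      (use assms in \<open>auto intro: prob_space_imp_sigma_finite\<close>)
  also have "\<dots> = (\<integral>\<^sup>+x. f x \<partial>L)" by (simp add: emeasure_space_1)
  finally show ?thesis .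
qed

lemma nn_integral_pair_snd: assumes "prob_space L" "f \<in> borel_measurable L"
  shows "(\<integral>\<^sup>+ab. f (snd ab) \<partial>(L \<Otimes>\<^sub>M L)) = (\<integral>\<^sup>+x. f x \<partial>L)"
proof -
  interpret prob_space L by fact
  have "(\<integral>\<^sup>+ab. f (snd ab) \<partial>(L \<Otimes>\<^sub>M L)) = (\<integral>\<^sup>+x. \<integral>\<^sup>+y. f (snd (x, y)) \<partial>L \<partial>L)"
    by (rule sigma_finite_measure.nn_integral_fst[symmetric])
      (use assms in \<open>auto intro: prob_space_imp_sigma_finite\<close>)
  also have "\<dots> = (\<integral>\<^sup>+x. f x \<partial>L)" by (simp add: emeasure_space_1)
  finally show ?thesis .
qed

lemma (in prob_space) prob_compl_finite_UN_ge:
  assumes "finite I" "\<And>i. i \<in> I \<Longrightarrow> B i \<in> events" "\<And>i. i \<in> I \<Longrightarrow> prob (B i) \<le> \<epsilon>"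
  shows "1 - real (card I) * \<epsilon> \<le> prob (space M - (\<Union>i\<in>I. B i))"
proof -
  have "prob (\<Union>i\<in>I. B i) \<le> (\<Sum>i\<in>I. prob (B i))"
    using assms(1,2) by (intro finite_measure_subadditive_finite) auto
  also have "\<dots> \<le> real (card I) * \<epsilon>"
    using sum_bounded_above[of I "\<lambda>i. prob (B i)" \<epsilon>] assms(3) by simp
  moreover have "(\<Union>i\<in>I. B i) \<in> events" using assms(1,2) by auto
  ultimately show ?thesis using prob_compl[of "\<Union>i\<in>I. B i"] by linarith
qed

section \<open>The adaptive episode process\<close>

definition record_space :: "'t measure \<Rightarrow> nat \<Rightarrow> (nat \<Rightarrow> 't \<times> 't) measure" where
  "record_space Tr n = PiM {..<n} (\<lambda>_. Tr \<Otimes>\<^sub>M Tr)"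

definition episode_kernel :: "'t measure \<Rightarrow> ('p \<Rightarrow> 't measure) \<Rightarrow> (nat \<Rightarrow> (nat \<Rightarrow> 't) \<Rightarrow> 'p) \<Rightarrow> nat
    \<Rightarrow> (nat \<Rightarrow> 't \<times> 't) \<Rightarrow> (nat \<Rightarrow> 't \<times> 't) measure" where
  "episode_kernel Tr law pol n h = distr (law (pol n (hist h n)) \<Otimes>\<^sub>M law (pol n (hist h n)))
        (record_space Tr (Suc n)) (\<lambda>ab. h(n := ab))"

lemma joint_Suc_kernel: "joint Tr law pol (Suc n) = joint Tr law pol n \<bind> episode_kernel Tr law pol n"
  unfolding episode_kernel_def[abs_def] record_space_def by simp

lemma measurable_hist: assumes "t \<le> n"
  shows "(\<lambda>h. hist h t) \<in> record_space Tr n \<rightarrow>\<^sub>M PiM {..<t} (\<lambda>_. Tr)"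
  unfolding hist_def record_space_def
proof (rule measurable_restrict)
  fix i assume "i \<in> {..<t}"
  then have i: "i \<in> {..<n}" using assms by auto
  then show "(\<lambda>h. fst (h i)) \<in> PiM {..<n} (\<lambda>_. Tr \<Otimes>\<^sub>M Tr) \<rightarrow>\<^sub>M Tr"
    by (intro measurable_compose[OF measurable_component_singleton[OF i] measurable_fst])
qed

lemma measurable_record_component: assumes "t < n"
  shows "(\<lambda>h. h t) \<in> record_space Tr n \<rightarrow>\<^sub>M Tr \<Otimes>\<^sub>M Tr"
  unfolding record_space_def using assms by (intro measurable_component_singleton) auto

lemma hist_in_space: "h \<in> space (record_space Tr n) \<Longrightarrow> t \<le> n \<Longrightarrow> hist h t \<in> space (PiM {..<t} (\<lambda>_. Tr))"
  using measurable_space[OF measurable_hist] by blast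

lemma measurable_record_update: assumes "h \<in> space (record_space Tr n)"
  shows "(\<lambda>ab. h(n := ab)) \<in> Tr \<Otimes>\<^sub>M Tr \<rightarrow>\<^sub>M record_space Tr (Suc n)"
  unfolding record_space_def
  by (rule measurable_fun_upd[where J="{..<n}"]) (use assms in \<open>auto simp: record_space_def\<close>)

locale adaptive_policies =
  fixes Tr :: "'t measure" and law :: "'p \<Rightarrow> 't measure" and pol :: "nat \<Rightarrow> (nat \<Rightarrow> 't) \<Rightarrow> 'p"
  assumes law_kernel: "\<And>t. (\<lambda>h. law (pol t h)) \<in> PiM {..<t} (\<lambda>_. Tr) \<rightarrow>\<^sub>M prob_algebra Tr"
begin

lemma prob_space_law: "hh \<in> space (PiM {..<t} (\<lambda>_. Tr)) \<Longrightarrow> prob_space (law (pol t hh))"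
  and sets_law: "hh \<in> space (PiM {..<t} (\<lambda>_. Tr)) \<Longrightarrow> sets (law (pol t hh)) = sets Tr"
  using measurable_space[OF law_kernel] by (auto simp: space_prob_algebra)

lemma sets_pair_law:
  "hh \<in> space (PiM {..<t} (\<lambda>_. Tr)) \<Longrightarrow> sets (law (pol t hh) \<Otimes>\<^sub>M law (pol t hh)) = sets (Tr \<Otimes>\<^sub>M Tr)"
  using sets_law by (intro sets_pair_measure_cong) auto

lemma prob_space_episode_kernel: assumes "h \<in> space (record_space Tr n)"
  shows "prob_space (episode_kernel Tr law pol n h)" "sets (episode_kernel Tr law pol n h) = sets (record_space Tr (Suc n))"
proof -
  let ?L = "law (pol n (hist h n))"
  have hs: "hist h n \<in> space (PiM {..<n} (\<lambda>_. Tr))" using hist_in_space[OF assms] by simp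
  have m: "(\<lambda>ab. h(n := ab)) \<in> ?L \<Otimes>\<^sub>M ?L \<rightarrow>\<^sub>M record_space Tr (Suc n)"
    using measurable_record_update[OF assms] measurable_cong_sets[OF sets_pair_law[OF hs] refl] by blast
  show "prob_space (episode_kernel Tr law pol n h)" unfolding episode_kernel_def
    by (rule prob_space.prob_space_distr[OF prob_space_pair[OF prob_space_law[OF hs] prob_space_law[OF hs]] m])
  show "sets (episode_kernel Tr law pol n h) = sets (record_space Tr (Suc n))" unfolding episode_kernel_def by simp
qed

lemma measurable_episode_kernel_subprob: "episode_kernel Tr law pol n \<in> record_space Tr n \<rightarrow>\<^sub>M subprob_algebra (record_space Tr (Suc n))"
  unfolding episode_kernel_def
proof (rule measurable_distr2[where M="Tr \<Otimes>\<^sub>M Tr"])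
  show "(\<lambda>(h, ab). h(n := ab)) \<in> record_space Tr n \<Otimes>\<^sub>M (Tr \<Otimes>\<^sub>M Tr) \<rightarrow>\<^sub>M record_space Tr (Suc n)"
    unfolding record_space_def split_beta'
    by (rule measurable_fun_upd[where J="{..<n}"]) auto
  have l: "(\<lambda>h. law (pol n (hist h n))) \<in> record_space Tr n \<rightarrow>\<^sub>M subprob_algebra Tr"
    by (rule measurable_prob_algebraD[OF measurable_compose[OF measurable_hist law_kernel]]) simp
  show "(\<lambda>h. law (pol n (hist h n)) \<Otimes>\<^sub>M law (pol n (hist h n))) \<in> record_space Tr n \<rightarrow>\<^sub>M subprob_algebra (Tr \<Otimes>\<^sub>M Tr)"
    by (rule measurable_pair_measure[OF l l])
qed

lemma measurable_episode_kernel: "episode_kernel Tr law pol n \<in> record_space Tr n \<rightarrow>\<^sub>M prob_algebra (record_space Tr (Suc n))"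
  unfolding prob_algebra_def
  by (rule measurable_restrict_space2) (use prob_space_episode_kernel measurable_episode_kernel_subprob in auto)

lemma joint_in_prob_algebra: "joint Tr law pol n \<in> space (prob_algebra (record_space Tr n))"
proof (induction n)
  case 0
  have "record_space Tr 0 = PiM {} (\<lambda>_. Tr \<Otimes>\<^sub>M Tr)" by (simp add: record_space_def)
  then show ?case by (simp add: space_prob_algebra prob_space_return)
next
  case (Suc n)
  show ?case unfolding joint_Suc_kernel space_prob_algebra
    using prob_space_bind'[OF Suc measurable_episode_kernel] sets_bind'[OF Suc measurable_episode_kernel] by simp
qed

lemma sets_joint: "sets (joint Tr law pol n) = sets (record_space Tr n)"
  and prob_space_joint: "prob_space (joint Tr law pol n)"
  using joint_in_prob_algebra[of n] by (auto simp: space_prob_algebra)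

lemma space_joint: "space (joint Tr law pol n) = space (record_space Tr n)"
  by (rule sets_eq_imp_space_eq[OF sets_joint])

definition compensated_sum :: "('t \<times> 't \<Rightarrow> real) \<Rightarrow> (nat \<Rightarrow> (nat \<Rightarrow> 't) \<Rightarrow> real) \<Rightarrow> nat \<Rightarrow> (nat \<Rightarrow> 't \<times> 't) \<Rightarrow> real" where
  "compensated_sum \<phi> \<Psi> n \<omega> = (\<Sum>t<n. \<phi> (\<omega> t) - \<Psi> t (hist \<omega> t))"

lemma compensated_sum_measurable:
  assumes \<phi>: "\<phi> \<in> borel_measurable (Tr \<Otimes>\<^sub>M Tr)"
    and \<Psi>: "\<And>t. \<Psi> t \<in> borel_measurable (PiM {..<t} (\<lambda>_. Tr))"
  shows "compensated_sum \<phi> \<Psi> n \<in> borel_measurable (record_space Tr n)"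
  unfolding compensated_sum_def
proof (intro borel_measurable_sum borel_measurable_diff)
  fix t assume "t \<in> {..<n}"
  then show "(\<lambda>\<omega>. \<phi> (\<omega> t)) \<in> borel_measurable (record_space Tr n)"
    and "(\<lambda>\<omega>. \<Psi> t (hist \<omega> t)) \<in> borel_measurable (record_space Tr n)"
    by (auto intro: measurable_compose[OF measurable_record_component \<phi>] measurable_compose[OF measurable_hist \<Psi>])
qed

lemma hist_fun_upd: "t \<le> n \<Longrightarrow> hist (h(n := ab)) t = hist h t"
  unfolding hist_def by (intro restrict_ext) auto

lemma compensated_sum_fun_upd: "compensated_sum \<phi> \<Psi> (Suc n) (h(n := ab)) = compensated_sum \<phi> \<Psi> n h + (\<phi> ab - \<Psi> n (hist h n))"
proof -
  have "compensated_sum \<phi> \<Psi> n (h(n := ab)) = compensated_sum \<phi> \<Psi> n h"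
    unfolding compensated_sum_def by (intro sum.cong refl) (simp add: hist_fun_upd)
  then show ?thesis by (simp add: compensated_sum_def hist_fun_upd)
qed

context
  fixes \<phi> :: "'t \<times> 't \<Rightarrow> real" and \<Psi> :: "nat \<Rightarrow> (nat \<Rightarrow> 't) \<Rightarrow> real"
  assumes \<phi>: "\<phi> \<in> borel_measurable (Tr \<Otimes>\<^sub>M Tr)"
    and \<Psi>: "\<And>t. \<Psi> t \<in> borel_measurable (PiM {..<t} (\<lambda>_. Tr))"
    and mgf: "\<And>t hh. hh \<in> space (PiM {..<t} (\<lambda>_. Tr)) \<Longrightarrow>
       (\<integral>\<^sup>+ab. ennreal (exp (\<phi> ab)) \<partial>(law (pol t hh) \<Otimes>\<^sub>M law (pol t hh))) \<le> ennreal (exp (\<Psi> t hh))"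
begin

lemma nn_integral_episode_kernel_exp_le:
  assumes h: "h \<in> space (record_space Tr n)"
  shows "(\<integral>\<^sup>+\<omega>. ennreal (exp (compensated_sum \<phi> \<Psi> (Suc n) \<omega>)) \<partial>episode_kernel Tr law pol n h)
    \<le> ennreal (exp (compensated_sum \<phi> \<Psi> n h))"
proof -
  let ?L = "law (pol n (hist h n))"
  have hs: "hist h n \<in> space (PiM {..<n} (\<lambda>_. Tr))" using hist_in_space[OF h] by simp
  note sL = sets_pair_law[OF hs]
  have upd: "(\<lambda>ab. h(n := ab)) \<in> ?L \<Otimes>\<^sub>M ?L \<rightarrow>\<^sub>M record_space Tr (Suc n)"
    using measurable_record_update[OF h] measurable_cong_sets[OF sL refl] by blast
  have "(\<lambda>ab. ennreal (exp (\<phi> ab))) \<in> borel_measurable (Tr \<Otimes>\<^sub>M Tr)"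
    using \<phi> by measurable
  then have exp_\<phi>: "(\<lambda>ab. ennreal (exp (\<phi> ab))) \<in> borel_measurable (?L \<Otimes>\<^sub>M ?L)"
    using measurable_cong_sets[OF sL refl] by blast
  have "(\<integral>\<^sup>+\<omega>. ennreal (exp (compensated_sum \<phi> \<Psi> (Suc n) \<omega>)) \<partial>episode_kernel Tr law pol n h)
      = (\<integral>\<^sup>+ab. ennreal (exp (compensated_sum \<phi> \<Psi> (Suc n) (h(n := ab)))) \<partial>(?L \<Otimes>\<^sub>M ?L))"
    unfolding episode_kernel_def using compensated_sum_measurable[OF \<phi> \<Psi>]
    by (intro nn_integral_distr[OF upd]) measurable
  also have "\<dots> = (\<integral>\<^sup>+ab. ennreal (exp (compensated_sum \<phi> \<Psi> n h - \<Psi> n (hist h n))) * ennreal (exp (\<phi> ab)) \<partial>(?L \<Otimes>\<^sub>M ?L))"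
    by (intro nn_integral_cong)
      (simp add: compensated_sum_fun_upd ennreal_mult[symmetric] exp_add[symmetric] algebra_simps)
  also have "\<dots> = ennreal (exp (compensated_sum \<phi> \<Psi> n h - \<Psi> n (hist h n))) * (\<integral>\<^sup>+ab. ennreal (exp (\<phi> ab)) \<partial>(?L \<Otimes>\<^sub>M ?L))"
    by (rule nn_integral_cmult[OF exp_\<phi>])
  also have "\<dots> \<le> ennreal (exp (compensated_sum \<phi> \<Psi> n h - \<Psi> n (hist h n))) * ennreal (exp (\<Psi> n (hist h n)))"
    by (intro mult_left_mono mgf[OF hs]) simp
  also have "\<dots> = ennreal (exp (compensated_sum \<phi> \<Psi> n h))"
    by (simp add: ennreal_mult[symmetric] exp_add[symmetric])
  finally show ?thesis .
qed

text \<open>The exponentiated compensated sum is a nonnegative supermartingale started at \<open>1\<close>.\<close>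
lemma nn_integral_exp_compensated_sum_le_1:
  "(\<integral>\<^sup>+\<omega>. ennreal (exp (compensated_sum \<phi> \<Psi> n \<omega>)) \<partial>joint Tr law pol n) \<le> 1"
proof (induction n)
  case 0
  have "record_space Tr 0 = PiM {} (\<lambda>_. Tr \<Otimes>\<^sub>M Tr)" by (simp add: record_space_def)
  then show ?case by (simp add: compensated_sum_def)
next
  case (Suc n)
  have "(\<integral>\<^sup>+\<omega>. ennreal (exp (compensated_sum \<phi> \<Psi> (Suc n) \<omega>)) \<partial>joint Tr law pol (Suc n))
      = (\<integral>\<^sup>+h. \<integral>\<^sup>+\<omega>. ennreal (exp (compensated_sum \<phi> \<Psi> (Suc n) \<omega>)) \<partial>episode_kernel Tr law pol n h \<partial>joint Tr law pol n)"
    unfolding joint_Suc_kernel using compensated_sum_measurable[OF \<phi> \<Psi>]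
      measurable_episode_kernel_subprob[unfolded measurable_cong_sets[OF sets_joint[symmetric] refl]]
    by (intro nn_integral_bind[where B = "record_space Tr (Suc n)"]) (measurable, auto)
  also have "\<dots> \<le> (\<integral>\<^sup>+h. ennreal (exp (compensated_sum \<phi> \<Psi> n h)) \<partial>joint Tr law pol n)"
    by (intro nn_integral_mono nn_integral_episode_kernel_exp_le) (simp add: space_joint)
  also have "\<dots> \<le> 1" by (rule Suc)
  finally show ?case .
qed

end

lemma compensated_sum_tail_bound:
  fixes a c :: real and n :: nat
  assumes f: "f \<in> borel_measurable Tr" and b: "\<And>x. x \<in> space Tr \<Longrightarrow> 0 \<le> f x \<and> f x \<le> 1"
    and sel: "sel = fst \<or> sel = snd"
  defines "E \<equiv> {\<omega> \<in> space (joint Tr law pol n).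
      c < (\<Sum>t<n. a * f (sel (\<omega> t)) - (exp a - 1) * integral\<^sup>L (law (pol t (hist \<omega> t))) f)}"
  shows "E \<in> sets (joint Tr law pol n)" and "emeasure (joint Tr law pol n) E \<le> ennreal (exp (- c))"
proof -
  define \<phi> where "\<phi> ab = a * f (sel ab)" for ab
  define \<Psi> where "\<Psi> t hh = (exp a - 1) * integral\<^sup>L (law (pol t hh)) f" for t hh
  have selm: "sel \<in> Tr \<Otimes>\<^sub>M Tr \<rightarrow>\<^sub>M Tr" using sel by auto
  have \<phi>m: "\<phi> \<in> borel_measurable (Tr \<Otimes>\<^sub>M Tr)"
    unfolding \<phi>_def using measurable_compose[OF selm f] by measurable
  have \<Psi>m: "\<Psi> t \<in> borel_measurable (PiM {..<t} (\<lambda>_. Tr))" for t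
  proof -
    have "(\<lambda>hh. integral\<^sup>L (law (pol t hh)) f) \<in> borel_measurable (PiM {..<t} (\<lambda>_. Tr))"
      by (rule measurable_compose[OF measurable_prob_algebraD[OF law_kernel] integral_measurable_subprob_algebra[OF f]])
    then show ?thesis unfolding \<Psi>_def by measurable
  qed
  have cond: "(\<integral>\<^sup>+ab. ennreal (exp (\<phi> ab)) \<partial>(law (pol t hh) \<Otimes>\<^sub>M law (pol t hh))) \<le> ennreal (exp (\<Psi> t hh))"
    if hh: "hh \<in> space (PiM {..<t} (\<lambda>_. Tr))" for t hh
  proof -
    let ?L = "law (pol t hh)"
    note L = prob_space_law[OF hh] sets_law[OF hh]
    have sp: "space ?L = space Tr" using L(2) by (rule sets_eq_imp_space_eq)
    have fL: "f \<in> borel_measurable ?L" using f measurable_cong_sets[OF L(2) refl] by blast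
    have efL: "(\<lambda>x. ennreal (exp (a * f x))) \<in> borel_measurable ?L" using fL by measurable
    have "(\<integral>\<^sup>+ab. ennreal (exp (\<phi> ab)) \<partial>(?L \<Otimes>\<^sub>M ?L)) = (\<integral>\<^sup>+x. ennreal (exp (a * f x)) \<partial>?L)"
      using sel nn_integral_pair_fst[OF L(1) efL] nn_integral_pair_snd[OF L(1) efL] unfolding \<phi>_def by auto
    also have "\<dots> \<le> ennreal (exp (\<Psi> t hh))"
      unfolding \<Psi>_def by (rule nn_integral_exp_mult_le[OF L(1) fL]) (use b sp in auto)
    finally show ?thesis .
  qed
  have Sm: "compensated_sum \<phi> \<Psi> n \<in> borel_measurable (joint Tr law pol n)"
    using compensated_sum_measurable[OF \<phi>m \<Psi>m] measurable_cong_sets[OF sets_joint refl] by blast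
  have "emeasure (joint Tr law pol n) {\<omega> \<in> space (joint Tr law pol n). c < compensated_sum \<phi> \<Psi> n \<omega>} \<le> ennreal (exp (- c))"
    by (rule emeasure_exp_tail_le[OF prob_space_joint Sm nn_integral_exp_compensated_sum_le_1[OF \<phi>m \<Psi>m cond]])
  moreover have "{\<omega> \<in> space (joint Tr law pol n). c < compensated_sum \<phi> \<Psi> n \<omega>} \<in> sets (joint Tr law pol n)"
    using Sm by measurable
  ultimately show "E \<in> sets (joint Tr law pol n)" "emeasure (joint Tr law pol n) E \<le> ennreal (exp (- c))"
    unfolding E_def compensated_sum_def \<phi>_def \<Psi>_def by (simp_all add: algebra_simps)
qed

end

section \<open>Concentration of the quadratic forms on a net\<close>

text \<open>\<open>feature_sum fst\<close> is \<open>\<Sigma>\<^sub>T\<close> (original runs) and \<open>feature_sum snd\<close> is the rerun matrix.\<close>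
definition feature_sum :: "('t \<times> 't \<Rightarrow> 't) \<Rightarrow> ('t \<Rightarrow> real^'d^'d) \<Rightarrow> nat \<Rightarrow> (nat \<Rightarrow> 't \<times> 't) \<Rightarrow> real^'d^'d"
  where "feature_sum sel psi T \<omega> = (\<Sum>t<T. psi (sel (\<omega> t)))"

definition Gamma_sum :: "('p \<Rightarrow> 't measure) \<Rightarrow> ('t \<Rightarrow> real^'d^'d) \<Rightarrow> (nat \<Rightarrow> (nat \<Rightarrow> 't) \<Rightarrow> 'p)
    \<Rightarrow> nat \<Rightarrow> (nat \<Rightarrow> 't \<times> 't) \<Rightarrow> real^'d^'d"
  where "Gamma_sum law psi pol T \<omega> = (\<Sum>t<T. Gamma law psi (pol t (hist \<omega> t)))"

locale psd_features = adaptive_policies Tr law pol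
  for Tr :: "'t measure" and law :: "'p \<Rightarrow> 't measure" and pol +
  fixes psi :: "'t \<Rightarrow> real^'d^'d" and D :: real
  assumes psi_meas: "psi \<in> borel_measurable Tr"
    and psi_psd: "\<And>\<tau>. \<tau> \<in> space Tr \<Longrightarrow> psd (psi \<tau>)"
    and psi_tr: "\<And>\<tau>. \<tau> \<in> space Tr \<Longrightarrow> trace (psi \<tau>) \<le> D"
begin

lemma quadratic_form_psi_measurable: "(\<lambda>x. v \<bullet> (psi x *v v)) \<in> borel_measurable Tr"
  using linear_quadratic_form[of v]
  by (intro measurable_compose[OF psi_meas] borel_measurable_continuous_onI linear_continuous_on)
    (simp add: linear_conv_bounded_linear)

lemma quadratic_form_psi_bounds:
  "x \<in> space Tr \<Longrightarrow> norm v \<le> 1 \<Longrightarrow> 0 \<le> v \<bullet> (psi x *v v) \<and> v \<bullet> (psi x *v v) \<le> D"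
  using psd_quadratic_nonneg psd_quadratic_le_trace psi_psd psi_tr by (meson order_trans)

context
  fixes L assumes L: "prob_space L" "sets L = sets Tr"
begin

lemma space_L: "space L = space Tr"
  using L(2) by (rule sets_eq_imp_space_eq)

lemma integrable_psi: "integrable L psi"
proof -
  interpret prob_space L by (rule L(1))
  show ?thesis
  proof (rule integrable_const_bound[where B="real CARD('d) * real CARD('d) * D"])
    show "AE x in L. norm (psi x) \<le> real CARD('d) * real CARD('d) * D"
      using psd_norm_le_trace psi_psd psi_tr space_L
      by (intro AE_I2 order_trans[OF psd_norm_le_trace] mult_left_mono) auto
    show "psi \<in> borel_measurable L" using psi_meas measurable_cong_sets[OF L(2) refl] by blast
  qed
qed

lemma linear_integral_psi: "linear f \<Longrightarrow> f (integral\<^sup>L L psi) = integral\<^sup>L L (\<lambda>x. f (psi x))"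
  using integral_bounded_linear[OF _ integrable_psi, of f] by (simp add: linear_conv_bounded_linear)

lemma quadratic_form_integral_psi:
  "v \<bullet> (integral\<^sup>L L psi *v v) = integral\<^sup>L L (\<lambda>x. v \<bullet> (psi x *v v))"
  using linear_integral_psi[OF linear_quadratic_form] .

lemma psd_integral_psi: "psd (integral\<^sup>L L psi)"
  unfolding psd_def
proof
  have "transpose (integral\<^sup>L L psi) = integral\<^sup>L L (\<lambda>x. transpose (psi x))"
    by (rule linear_integral_psi[OF linear_transpose])
  also have "\<dots> = integral\<^sup>L L psi"
    using psi_psd space_L by (intro Bochner_Integration.integral_cong) (auto simp: psd_def)
  finally show "transpose (integral\<^sup>L L psi) = integral\<^sup>L L psi" .
  show "\<forall>x. 0 \<le> x \<bullet> (integral\<^sup>L L psi *v x)"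
    unfolding quadratic_form_integral_psi
    using psi_psd space_L by (auto intro!: Bochner_Integration.integral_nonneg simp: psd_def)
qed

lemma trace_integral_psi_le: "trace (integral\<^sup>L L psi) \<le> D"
proof -
  interpret prob_space L by (rule L(1))
  have "trace (integral\<^sup>L L psi) = integral\<^sup>L L (\<lambda>x. trace (psi x))"
    by (rule linear_integral_psi[OF linear_trace])
  also have "\<dots> \<le> integral\<^sup>L L (\<lambda>x. D)"
    using integrable_bounded_linear[OF _ integrable_psi, of trace] linear_trace psi_tr space_L
    by (intro integral_mono) (auto simp: linear_conv_bounded_linear)
  finally show ?thesis by (simp add: prob_space)
qed

end

lemma record_in_space:
  assumes "\<omega> \<in> space (joint Tr law pol n)" "t < n"
  shows "fst (\<omega> t) \<in> space Tr" "snd (\<omega> t) \<in> space Tr"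
    and "hist \<omega> t \<in> space (PiM {..<t} (\<lambda>_. Tr))"
proof -
  have \<omega>: "\<omega> \<in> space (record_space Tr n)" using assms(1) by (simp add: space_joint)
  then have "\<omega> t \<in> space (Tr \<Otimes>\<^sub>M Tr)" using measurable_space[OF measurable_record_component[OF assms(2)]] by blast
  then show "fst (\<omega> t) \<in> space Tr" "snd (\<omega> t) \<in> space Tr" by (auto simp: space_pair_measure)
  show "hist \<omega> t \<in> space (PiM {..<t} (\<lambda>_. Tr))" using hist_in_space[OF \<omega>] assms(2) by simp
qed

lemma
  assumes "hh \<in> space (PiM {..<t} (\<lambda>_. Tr))"
  shows psd_Gamma: "psd (Gamma law psi (pol t hh))"
    and trace_Gamma_le: "trace (Gamma law psi (pol t hh)) \<le> D"
    and quadratic_form_Gamma: "v \<bullet> (Gamma law psi (pol t hh) *v v) = (\<integral>x. v \<bullet> (psi x *v v) \<partial>law (pol t hh))"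
  using psd_integral_psi trace_integral_psi_le quadratic_form_integral_psi
    prob_space_law[OF assms] sets_law[OF assms]
  unfolding Gamma_def by auto

lemma
  assumes \<omega>: "\<omega> \<in> space (joint Tr law pol T)" and sel: "sel = fst \<or> sel = snd"
  shows psd_feature_sum: "psd (feature_sum sel psi T \<omega>)"
    and trace_feature_sum_le: "trace (feature_sum sel psi T \<omega>) \<le> real T * D"
proof -
  have sel_space: "sel (\<omega> t) \<in> space Tr" if "t < T" for t
    using record_in_space[OF \<omega> that] sel by auto
  show "psd (feature_sum sel psi T \<omega>)" unfolding feature_sum_def by (intro psd_sum psi_psd sel_space) simp
  show "trace (feature_sum sel psi T \<omega>) \<le> real T * D"
    unfolding feature_sum_def trace_sum using sum_bounded_above[of "{..<T}" _ D] psi_tr sel_space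
    by (simp add: mult.commute)
qed

lemma
  assumes \<omega>: "\<omega> \<in> space (joint Tr law pol T)"
  shows psd_Gamma_sum: "psd (Gamma_sum law psi pol T \<omega>)"
    and trace_Gamma_sum_le: "trace (Gamma_sum law psi pol T \<omega>) \<le> real T * D"
    and quadratic_form_Gamma_sum: "v \<bullet> (Gamma_sum law psi pol T \<omega> *v v)
       = (\<Sum>t<T. \<integral>x. v \<bullet> (psi x *v v) \<partial>law (pol t (hist \<omega> t)))"
  using psd_Gamma[OF record_in_space(3)[OF \<omega>]] trace_Gamma_le[OF record_in_space(3)[OF \<omega>]]
    quadratic_form_Gamma[OF record_in_space(3)[OF \<omega>]]
    sum_bounded_above[of "{..<T}" "\<lambda>t. trace (Gamma law psi (pol t (hist \<omega> t)))" D]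
  unfolding Gamma_sum_def trace_sum quadratic_form_sum by (auto intro: psd_sum simp: mult.commute)

lemma quadratic_form_deviation_tail:
  fixes a c :: real and v :: "real^'d" and T :: nat
  assumes D: "0 < D" and v: "norm v \<le> 1" and sel: "sel = fst \<or> sel = snd"
  defines "E \<equiv> {\<omega> \<in> space (joint Tr law pol T). D * c < a * (v \<bullet> (feature_sum sel psi T \<omega> *v v))
      - (exp a - 1) * (v \<bullet> (Gamma_sum law psi pol T \<omega> *v v))}"
  shows "E \<in> sets (joint Tr law pol T)" and "emeasure (joint Tr law pol T) E \<le> ennreal (exp (- c))"
proof -
  define f where "f x = v \<bullet> (psi x *v v) / D" for x
  have f: "f \<in> borel_measurable Tr"
    unfolding f_def using quadratic_form_psi_measurable by measurable
  have f_bounds: "0 \<le> f x \<and> f x \<le> 1" if "x \<in> space Tr" for x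
    using quadratic_form_psi_bounds[OF that v] D by (simp add: f_def)
  have "(\<Sum>t<T. a * f (sel (\<omega> t)) - (exp a - 1) * integral\<^sup>L (law (pol t (hist \<omega> t))) f)
      = (a * (v \<bullet> (feature_sum sel psi T \<omega> *v v)) - (exp a - 1) * (v \<bullet> (Gamma_sum law psi pol T \<omega> *v v))) / D"
    if "\<omega> \<in> space (joint Tr law pol T)" for \<omega>
    unfolding quadratic_form_Gamma_sum[OF that] feature_sum_def quadratic_form_sum f_def integral_divide_zero
    by (simp add: sum_subtractf sum_distrib_left sum_divide_distrib diff_divide_distrib)
  then have "E = {\<omega> \<in> space (joint Tr law pol T).
      c < (\<Sum>t<T. a * f (sel (\<omega> t)) - (exp a - 1) * integral\<^sup>L (law (pol t (hist \<omega> t))) f)}"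
    unfolding E_def using D by (auto simp: less_divide_eq mult.commute)
  then show "E \<in> sets (joint Tr law pol T)" "emeasure (joint Tr law pol T) E \<le> ennreal (exp (- c))"
    using compensated_sum_tail_bound[OF f f_bounds sel] by simp_all
qed

lemma net_deviation_bounds:
  fixes V :: "(real^'d) set" and K T :: nat and \<delta> :: real
  assumes D: "0 < D" and V: "finite V" "\<And>v. v \<in> V \<Longrightarrow> norm v \<le> 1" "card V \<le> K" "0 < K"
    and \<delta>: "0 < \<delta>"
  shows "\<exists>A\<in>sets (joint Tr law pol T). 1 - \<delta> \<le> measure (joint Tr law pol T) A \<and>
    (\<forall>\<omega>\<in>A. \<forall>v\<in>V.
       (1/10) * (v \<bullet> (feature_sum fst psi T \<omega> *v v)) - (exp (1/10) - 1) * (v \<bullet> (Gamma_sum law psi pol T \<omega> *v v))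
         \<le> D * ln (2 * K / \<delta>) \<and>
       (1 - exp (- (1/10))) * (v \<bullet> (Gamma_sum law psi pol T \<omega> *v v)) - (1/10) * (v \<bullet> (feature_sum snd psi T \<omega> *v v))
         \<le> D * ln (2 * K / \<delta>))"
proof -
  define J where "J = joint Tr law pol T"
  interpret J: prob_space J unfolding J_def by (rule prob_space_joint)
  define c where "c = ln (2 * K / \<delta>)"
  define a :: "bool \<Rightarrow> real" where "a b = (if b then 1/10 else - (1/10))" for b
  define sel :: "bool \<Rightarrow> 't \<times> 't \<Rightarrow> 't" where "sel b = (if b then fst else snd)" for b
  define Bad where "Bad = (\<lambda>(v, b). {\<omega> \<in> space J. D * c < a b * (v \<bullet> (feature_sum (sel b) psi T \<omega> *v v))
      - (exp (a b) - 1) * (v \<bullet> (Gamma_sum law psi pol T \<omega> *v v))})"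
  have "exp (- c) = \<delta> / (2 * K)" unfolding c_def using \<delta> V(4) by (simp add: exp_minus)
  then have Bad: "Bad vb \<in> J.events \<and> J.prob (Bad vb) \<le> \<delta> / (2 * K)" if "vb \<in> V \<times> UNIV" for vb
  proof -
    from that obtain v b where vb: "vb = (v, b)" "v \<in> V" by auto
    have "Bad vb \<in> J.events \<and> emeasure J (Bad vb) \<le> ennreal (\<delta> / (2 * K))"
      using quadratic_form_deviation_tail[where v = v and sel = "sel b" and c = c and a = "a b" and T = T]
        D V(2)[OF vb(2)] \<open>exp (- c) = \<delta> / (2 * K)\<close>
      unfolding Bad_def J_def sel_def vb(1) by auto
    then show ?thesis using \<delta> by (simp add: J.emeasure_eq_measure)
  qed
  define A where "A = space J - (\<Union>vb\<in>V \<times> UNIV. Bad vb)"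
  have "1 - \<delta> \<le> 1 - real (card (V \<times> (UNIV :: bool set))) * (\<delta> / (2 * K))"
    using V(3,4) \<delta> by (simp add: card_cartesian_product field_simps)
  also have "\<dots> \<le> J.prob A"
    unfolding A_def using Bad V(1) by (intro J.prob_compl_finite_UN_ge) auto
  finally have "1 - \<delta> \<le> J.prob A" .
  moreover have "A \<in> J.events"
    unfolding A_def using Bad V(1) by (intro sets.compl_sets sets.finite_UN) auto
  moreover have "(1/10) * (v \<bullet> (feature_sum fst psi T \<omega> *v v))
        - (exp (1/10) - 1) * (v \<bullet> (Gamma_sum law psi pol T \<omega> *v v)) \<le> D * c \<and>
      (1 - exp (- (1/10))) * (v \<bullet> (Gamma_sum law psi pol T \<omega> *v v))
        - (1/10) * (v \<bullet> (feature_sum snd psi T \<omega> *v v)) \<le> D * c"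
    if "\<omega> \<in> A" "v \<in> V" for \<omega> v
  proof -
    have "\<omega> \<in> space J" "\<omega> \<notin> Bad (v, True)" "\<omega> \<notin> Bad (v, False)"
      using that unfolding A_def by auto
    then show ?thesis by (simp add: Bad_def a_def sel_def not_less algebra_simps)
  qed
  ultimately show ?thesis unfolding J_def c_def by blast
qed

end

section \<open>The eigenvalue bounds\<close>

lemma one_le_ln_threshold:
  assumes "1 \<le> real T" "0 < \<delta>" "\<delta> < 1"
  shows "1 \<le> ln ((2 + 32 * real T) / \<delta>)"
proof -
  have "exp 1 \<le> (3::real)" by (rule exp_le)
  also have "3 \<le> (2 + 32 * real T) / \<delta>" using assms by (simp add: le_divide_eq)
  finally show ?thesis using assms by (subst ln_ge_iff) auto
qed

lemma ln_grid_net_card_le: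
  fixes d T :: nat and \<delta> :: real
  assumes d: "1 \<le> d" "d \<le> T" and \<delta>: "0 < \<delta>" "\<delta> < 1"
  shows "ln (2 * real ((2 * (T * d) + 1) ^ d) / \<delta>) \<le> 4 * real d * ln ((2 + 32 * real T) / \<delta>)"
proof -
  define l where "l = ln ((2 + 32 * real T) / \<delta>)"
  have T: "1 \<le> real T" using d by simp
  have l_ge: "ln (2 + 32 * real T) \<le> l" "- ln \<delta> \<le> l"
    using \<delta> T by (simp_all add: l_def ln_div)
  have "1 \<le> l" unfolding l_def using T \<delta> by (rule one_le_ln_threshold)
  have "2 * real (T * d) + 1 \<le> (2 + 32 * real T)^2"
  proof -
    have "real T * real d \<le> real T * real T" using d by (simp add: mult_left_mono)
    moreover have "0 \<le> real T * real T" by simp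
    moreover have "(2 + 32 * real T)^2 = 4 + 128 * real T + 1024 * (real T * real T)"
      by (simp add: power2_eq_square algebra_simps)
    ultimately show ?thesis by (simp only: of_nat_mult)
  qed
  then have "ln (2 * real (T * d) + 1) \<le> ln ((2 + 32 * real T)^2)"
    by (subst ln_le_cancel_iff) (auto intro: add_nonneg_pos)
  also have "\<dots> = 2 * ln (2 + 32 * real T)" using T by (simp add: ln_realpow)
  finally have "ln (2 * real (T * d) + 1) \<le> 2 * ln (2 + 32 * real T)" .
  then have grid: "ln (2 * real (T * d) + 1) \<le> 2 * l" using l_ge by linarith
  have "ln 2 \<le> ln (2 + 32 * real T)" by (subst ln_le_cancel_iff) auto
  then have "ln 2 \<le> l" using l_ge(1) by linarith
  define y where "y = 2 * real (T * d) + 1"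
  have "0 < y" by (simp add: y_def add_nonneg_pos)
  have "ln (2 * real ((2 * (T * d) + 1) ^ d) / \<delta>) = ln 2 + ln (y ^ d) - ln \<delta>"
    using \<delta> \<open>0 < y\<close> by (simp add: y_def ln_div ln_mult add.commute)
  also have "\<dots> = ln 2 + d * ln y - ln \<delta>" using \<open>0 < y\<close> by (simp add: ln_realpow)
  also have "\<dots> \<le> l + d * (2 * l) + l"
    using grid \<open>ln 2 \<le> l\<close> l_ge(2) mult_left_mono[of "ln y" "2 * l" "real d"] by (simp add: y_def)
  also have "\<dots> \<le> 4 * real d * l"
    using mult_right_mono[of 1 "real d" l] \<open>1 \<le> l\<close> d by simp
  finally show ?thesis unfolding l_def .
qed

lemma threshold_dominates_net_terms:
  fixes d T :: nat and D m \<delta> :: real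
  assumes D: "0 < D" and d: "1 \<le> d" and \<delta>: "0 < \<delta>" "\<delta> < 1"
    and trace: "real d * m \<le> real T * D"
    and threshold: "12544 * D * real d * ln ((2 + 32 * real T) / \<delta>) \<le> m"
  shows "0 \<le> m" and "1 \<le> T" and "2 * D \<le> m / 3136"
    and "D * ln (2 * real ((2 * (T * d) + 1) ^ d) / \<delta>) \<le> m / 3136"
proof -
  define l where "l = ln ((2 + 32 * real T) / \<delta>)"
  have "0 < l" unfolding l_def using \<delta> by (simp add: less_divide_eq)
  then have "0 < 12544 * D * real d * l" using D d by simp
  then have m_pos: "0 < m" using threshold unfolding l_def by linarith
  then show "0 \<le> m" by simp
  have "0 < real d * m" using m_pos d by simp
  then have "0 < real T * D" using trace by linarith
  then have "0 < T" using D by (simp add: zero_less_mult_iff)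
  then show "1 \<le> T" by simp
  then have T: "1 \<le> real T" by simp
  have "1 \<le> l" unfolding l_def using T \<delta> by (rule one_le_ln_threshold)
  have dl: "1 \<le> real d * l" using mult_mono[of 1 "real d" 1 l] d \<open>1 \<le> l\<close> by simp
  have "D * (12544 * d * d * l) \<le> D * real T"
  proof -
    have "12544 * D * d * l * d \<le> m * d" using threshold d unfolding l_def by (intro mult_right_mono) auto
    then show ?thesis using trace by (simp add: mult_ac)
  qed
  then have "12544 * d * d * l \<le> real T" using D by simp
  moreover have "real d * 1 \<le> real d * (12544 * (d * l))"
    using dl by (intro mult_left_mono) auto
  ultimately have "d \<le> T" by (simp add: mult_ac)
  then have "D * ln (2 * real ((2 * (T * d) + 1) ^ d) / \<delta>) \<le> D * (4 * real d * l)"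
    using ln_grid_net_card_le[OF d _ \<delta>] D unfolding l_def by (intro mult_left_mono) auto
  then show "D * ln (2 * real ((2 * (T * d) + 1) ^ d) / \<delta>) \<le> m / 3136"
    using threshold unfolding l_def by (simp add: mult_ac)
  have "12544 * D * 1 \<le> 12544 * D * (d * l)" using D dl by (intro mult_left_mono) auto
  then have "12544 * D \<le> m" using threshold unfolding l_def by (simp add: mult_ac)
  then show "2 * D \<le> m / 3136" using D by simp
qed

lemma exp_one_tenth_bounds:
  "0 < exp (1/10) - (1::real)" "exp (1/10) - 1 \<le> (1/9::real)" "1/11 \<le> 1 - exp (- (1/10::real))"
proof -
  show "0 < exp (1/10) - (1::real)" by simp
  have "1 + (- (1/10)) \<le> exp (- (1/10::real))" by (rule exp_ge_add_one_self)
  then have "inverse (exp (- (1/10::real))) \<le> inverse (9/10)" by (intro le_imp_inverse_le) auto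
  then show "exp (1/10) - 1 \<le> (1/9::real)" by (simp add: exp_minus)
  have "1 + 1/10 \<le> exp (1/10::real)" by (rule exp_ge_add_one_self)
  then have "inverse (exp (1/10::real)) \<le> inverse (11/10)" by (intro le_imp_inverse_le) auto
  then show "1/11 \<le> 1 - exp (- (1/10::real))" by (simp add: exp_minus)
qed

context psd_features
begin

lemma lambda_min_half_whp:
  fixes T :: nat and \<delta> :: real
  assumes D: "0 < D" and \<delta>: "0 < \<delta>" "\<delta> < 1"
  shows "\<exists>A\<in>sets (joint Tr law pol T). 1 - \<delta> \<le> measure (joint Tr law pol T) A \<and>
    (\<forall>\<omega>\<in>A. 12544 * D * real CARD('d) * ln ((2 + 32 * real T) / \<delta>) \<le> lambda_min (feature_sum fst psi T \<omega>) \<longrightarrow>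
       lambda_min (feature_sum fst psi T \<omega>) / 2 \<le> lambda_min (feature_sum snd psi T \<omega>) \<and>
       lambda_min (feature_sum fst psi T \<omega>) / 2 \<le> lambda_min (Gamma_sum law psi pol T \<omega>))"
proof -
  define d where "d = CARD('d)"
  define V :: "(real^'d) set" where "V = grid_net (T * d)"
  define K where "K = (2 * (T * d) + 1) ^ d"
  have V_norm: "norm v \<le> 1" if "v \<in> V" for v using that by (simp add: V_def grid_net_def)
  have V: "finite V" "card V \<le> K" "0 < K"
    using finite_grid_net card_grid_net_le unfolding V_def K_def d_def by auto
  obtain A where A: "A \<in> sets (joint Tr law pol T)" "1 - \<delta> \<le> measure (joint Tr law pol T) A"
    and dev: "\<And>\<omega> v. \<omega> \<in> A \<Longrightarrow> v \<in> V \<Longrightarrow>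
      (1/10) * (v \<bullet> (feature_sum fst psi T \<omega> *v v)) - (exp (1/10) - 1) * (v \<bullet> (Gamma_sum law psi pol T \<omega> *v v))
         \<le> D * ln (2 * K / \<delta>) \<and>
      (1 - exp (- (1/10))) * (v \<bullet> (Gamma_sum law psi pol T \<omega> *v v)) - (1/10) * (v \<bullet> (feature_sum snd psi T \<omega> *v v))
         \<le> D * ln (2 * K / \<delta>)"
    using net_deviation_bounds[OF D V(1) V_norm V(2,3) \<delta>(1), where T = T] by blast
  show ?thesis
  proof (intro bexI[OF _ A(1)] conjI ballI impI A(2))
    fix \<omega> assume "\<omega> \<in> A"
    then have \<omega>: "\<omega> \<in> space (joint Tr law pol T)" using A(1) sets.sets_into_space by blast
    let ?S = "feature_sum fst psi T \<omega>" and ?S' = "feature_sum snd psi T \<omega>" and ?G = "Gamma_sum law psi pol T \<omega>"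
    assume threshold: "12544 * D * real CARD('d) * ln ((2 + 32 * real T) / \<delta>) \<le> lambda_min ?S"
    have S: "psd ?S" "trace ?S \<le> real T * D" and S': "psd ?S'" "trace ?S' \<le> real T * D"
      and G: "psd ?G" "trace ?G \<le> real T * D"
      using psd_feature_sum[OF \<omega>] trace_feature_sum_le[OF \<omega>] psd_Gamma_sum[OF \<omega>]
        trace_Gamma_sum_le[OF \<omega>] by auto
    have "real d * lambda_min ?S \<le> real T * D"
      using card_mult_lambda_min_le_trace[OF psd_symmetric[OF S(1)]] S(2) unfolding d_def by linarith
    moreover have "1 \<le> d" by (simp add: d_def Suc_le_eq)
    ultimately have bounds: "0 \<le> lambda_min ?S" "1 \<le> T" "2 * D \<le> lambda_min ?S / 3136"
      "D * ln (2 * real K / \<delta>) \<le> lambda_min ?S / 3136"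
      using threshold_dominates_net_terms[OF D _ \<delta> _ threshold[folded d_def]] unfolding K_def by auto
    have cover: "\<exists>v\<in>V. 2 * (real T * D) * norm (u - v) \<le> 2 * D" if "norm u = 1" for u
      unfolding V_def d_def by (rule grid_net_scaled_cover[OF bounds(2) less_imp_le[OF D] that])
    show "lambda_min ?S / 2 \<le> lambda_min ?S'" "lambda_min ?S / 2 \<le> lambda_min ?G"
      using lambda_min_half_from_net_bounds[OF S(1) S'(1) G(1) S(2) S'(2) G(2) bounds(1) V_norm cover
        bounds(3) _ _ _ exp_one_tenth_bounds] dev[OF \<open>\<omega> \<in> A\<close>] bounds(4)
      by auto
  qed
qed

lemma psi_eq_0_if_D_nonpos:
  assumes "D \<le> 0" "\<tau> \<in> space Tr" shows "psi \<tau> = 0"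
proof -
  have "\<bar>psi \<tau> $ i $ j\<bar> \<le> 0" for i j
    using psd_entry_abs_le_trace[OF psi_psd[OF assms(2)]] psi_tr[OF assms(2)] assms(1) by (meson order_trans)
  then show ?thesis by (simp add: vec_eq_iff)
qed

lemma feature_sum_eq_0_if_D_nonpos:
  assumes D: "D \<le> 0" and \<omega>: "\<omega> \<in> space (joint Tr law pol T)" and sel: "sel = fst \<or> sel = snd"
  shows "feature_sum sel psi T \<omega> = 0"
  unfolding feature_sum_def using record_in_space[OF \<omega>] sel psi_eq_0_if_D_nonpos[OF D]
  by (intro sum.neutral) auto

lemma Gamma_sum_eq_0_if_D_nonpos:
  assumes D: "D \<le> 0" and \<omega>: "\<omega> \<in> space (joint Tr law pol T)"
  shows "Gamma_sum law psi pol T \<omega> = 0"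
proof -
  have "Gamma law psi (pol t (hist \<omega> t)) = 0" if "t < T" for t
  proof -
    note hh = record_in_space(3)[OF \<omega> that]
    have "space (law (pol t (hist \<omega> t))) = space Tr" by (rule sets_eq_imp_space_eq[OF sets_law[OF hh]])
    then have "Gamma law psi (pol t (hist \<omega> t)) = integral\<^sup>L (law (pol t (hist \<omega> t))) (\<lambda>_. 0)"
      unfolding Gamma_def using psi_eq_0_if_D_nonpos[OF D] by (intro Bochner_Integration.integral_cong) auto
    then show ?thesis by simp
  qed
  then show ?thesis unfolding Gamma_sum_def by (intro sum.neutral) auto
qed

end

theorem mainTheorem14:
  fixes Tr :: "'t measure"
    and law :: "'p \<Rightarrow> 't measure"
    and pol :: "nat \<Rightarrow> (nat \<Rightarrow> 't) \<Rightarrow> 'p"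
    and psi :: "'t \<Rightarrow> real^'d^'d"
    and D \<delta> :: real and T :: nat
  assumes law_kernel: "\<And>t. (\<lambda>h. law (pol t h)) \<in> PiM {..<t} (\<lambda>_. Tr) \<rightarrow>\<^sub>M prob_algebra Tr"
    and psi_meas: "psi \<in> borel_measurable Tr"
    and psi_psd: "\<And>\<tau>. \<tau> \<in> space Tr \<Longrightarrow> psd (psi \<tau>)"
    and psi_tr: "\<And>\<tau>. \<tau> \<in> space Tr \<Longrightarrow> trace (psi \<tau>) \<le> D"
    and delta: "0 < \<delta>" "\<delta> < 1"
  shows "\<exists>A \<in> sets (joint Tr law pol T).
           1 - \<delta> \<le> measure (joint Tr law pol T) A \<and>
           (\<forall>\<omega>\<in>A.
              let \<Sigma> = (\<Sum>t<T. psi (fst (\<omega> t)));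
                  \<Sigma>' = (\<Sum>t<T. psi (snd (\<omega> t)));
                  G = (\<Sum>t<T. Gamma law psi (pol t (hist \<omega> t)))
              in lambda_min \<Sigma> \<ge> 12544 * D * real CARD('d) * ln ((2 + 32 * real T) / \<delta>) \<longrightarrow>
                 lambda_min \<Sigma>' \<ge> lambda_min \<Sigma> / 2 \<and> lambda_min G \<ge> lambda_min \<Sigma> / 2)"
proof -
  interpret psd_features Tr law pol psi D
    using law_kernel psi_meas psi_psd psi_tr by unfold_locales
  show ?thesis
  proof (cases "0 < D")
    case True
    show ?thesis
      using lambda_min_half_whp[OF True delta, of T]
      unfolding Let_def feature_sum_def Gamma_sum_def .
  next
    case False
    interpret J: prob_space "joint Tr law pol T" by (rule prob_space_joint)
    show ?thesis
      using delta False feature_sum_eq_0_if_D_nonpos[of _ T] Gamma_sum_eq_0_if_D_nonpos[of _ T]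
      by (intro bexI[of _ "space (joint Tr law pol T)"])
        (auto simp: Let_def J.prob_space lambda_min_zero feature_sum_def Gamma_sum_def)
  qed
qed

end
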